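(* In the setting of the context, for each particle $j$: for every $0<p<\tfrac12$ and every $\varepsilon>0$, $$\lim_{i\to\infty}\mathrm{Prob}\Big(\|\widetilde{\mathcal{P}}\tilde\theta_i^{(j)}\|\ge\frac{\varepsilon}{i^p}\Big)=0,$$ so $\|\widetilde{\mathcal{P}}\tilde\theta_i^{(j)}\|\to0$ in probability at a rate arbitrarily close to $1/\sqrt i$; moreover $\widetilde{\mathcal{P}}\tilde\theta_i^{(j)}\to0$ almost surely as $i\to\infty$.
   Context: Let $H\in\mathbb{R}^{n\times d}$ have rank $h$, $\Sigma\in\mathbb{R}^{n\times n}$ symmetric positive definite, $y\in\mathbb{R}^n$, $J\ge2$, and a fixed initial ensemble $v_0^{(1)},\dots,v_0^{(J)}$ with empirical covariance $\Gamma_0=\frac1{J-1}\sum_j(v_0^{(j)}-\bar v_0)(v_0^{(j)}-\bar v_0)^\top$. Let $\varepsilon_i^{(j)}$ ($i\ge0$, $1\le j\le J$) be i.i.d. $\mathcal{N}(0,\Sigma)$. Define $C_0=H\Gamma_0H^\top$, $C_{i+1}=\Sigma-\Sigma(C_i+\Sigma)^{-1}\Sigma$, $\widetilde{\mathcal{M}}_i=\Sigma(C_i+\Sigma)^{-1}$, $\tilde\theta_0^{(j)}=Hv_0^{(j)}-y$, $\tilde\theta_{i+1}^{(j)}=\widetilde{\mathcal{M}}_i\tilde\theta_i^{(j)}+(I-\widetilde{\mathcal{M}}_i)\varepsilon_i^{(j)}$. Let $r$ be the number of positive eigenvalues of $C_0\tilde w=\tilde\delta\Sigma\tilde w$, and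 $\tilde w_1,\dots,\tilde w_n$ a basis of $\mathbb{R}^n$ with $\tilde w_k^\top\Sigma\tilde w_l$ equal to $1$ if $k=l$, $0$ otherwise, each a generalized eigenvector of $(C_i,\Sigma)$ for all $i$, with $\tilde w_1,\dots,\tilde w_r\in\mathsf{Ran}(\Sigma^{-1}H)$ having positive eigenvalues, $\tilde w_{r+1},\dots,\tilde w_h\in\mathsf{Ran}(\Sigma^{-1}H)$ eigenvalue zero, $\tilde w_{h+1},\dots,\tilde w_n\in\mathsf{Ker}(H^\top)$. $\widetilde{\mathcal{P}}=\Sigma\widetilde W_{1:r}\widetilde W_{1:r}^\top$ where $\widetilde W_{1:r}=[\tilde w_1,\dots,\tilde w_r]$. *)

theory Defs
  imports "HOL-Analysis.Analysis" "HOL-Probability.Probability"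
begin

definition outer :: "real^'n \<Rightarrow> real^'m \<Rightarrow> real^'m^'n" where
  "outer u v = (\<chi> a b. u $ a * v $ b)"

definition spd :: "real^'n^'n \<Rightarrow> bool" where
  "spd S \<longleftrightarrow> transpose S = S \<and> (\<forall>x. x \<noteq> 0 \<longrightarrow> x \<bullet> (S *v x) > 0)"

definition gauss_density :: "real^'n^'n \<Rightarrow> real^'n \<Rightarrow> real" where
  "gauss_density S x =
     exp (- (x \<bullet> (matrix_inv S *v x)) / 2) / sqrt ((2 * pi) ^ CARD('n) * det S)"

definition ens_mean :: "nat \<Rightarrow> (nat \<Rightarrow> real^'d) \<Rightarrow> real^'d" where
  "ens_mean J v = (1 / real J) *\<^sub>R (\<Sum>j=1..J. v j)"

definition ens_cov :: "nat \<Rightarrow> (nat \<Rightarrow> real^'d) \<Rightarrow> real^'d^'d" where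
  "ens_cov J v = (1 / (real J - 1)) *\<^sub>R
     (\<Sum>j=1..J. outer (v j - ens_mean J v) (v j - ens_mean J v))"

primrec Cseq :: "real^'d^'n \<Rightarrow> real^'n^'n \<Rightarrow> real^'d^'d \<Rightarrow> nat \<Rightarrow> real^'n^'n" where
  "Cseq H S G 0 = H ** G ** transpose H"
| "Cseq H S G (Suc i) = S - S ** matrix_inv (Cseq H S G i + S) ** S"

definition Mt :: "real^'d^'n \<Rightarrow> real^'n^'n \<Rightarrow> real^'d^'d \<Rightarrow> nat \<Rightarrow> real^'n^'n" where
  "Mt H S G i = S ** matrix_inv (Cseq H S G i + S)"

text \<open>The random iterates tilde theta_i^(j)(omega); eps i j omega is the noise.\<close>
primrec theta :: "real^'d^'n \<Rightarrow> real^'n^'n \<Rightarrow> real^'n \<Rightarrow> nat \<Rightarrow> (nat \<Rightarrow> real^'d)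
    \<Rightarrow> (nat \<Rightarrow> nat \<Rightarrow> 'a \<Rightarrow> real^'n) \<Rightarrow> nat \<Rightarrow> nat \<Rightarrow> 'a \<Rightarrow> real^'n" where
  "theta H S y J v eps 0 j \<omega> = H *v v j - y"
| "theta H S y J v eps (Suc i) j \<omega> =
     Mt H S (ens_cov J v) i *v theta H S y J v eps i j \<omega>
     + (mat 1 - Mt H S (ens_cov J v) i) *v eps i j \<omega>"

end

(* In the Sigma-orthonormal basis w k, which diagonalises every C i at once, the recursion for
   theta decouples into scalar recursions for the coefficients w k . theta i.  The generalised
   eigenvalues obey delta (i + 1) = delta i / (1 + delta i), so delta i = delta / (1 + i * delta)
   with delta = delta 0 > 0 for k <= r, and solving the scalar recursion gives
     w k . theta i = (w k . theta 0 + delta * S i) / (1 + i * delta),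
   where S i = sum of w k . eps l over l < i is a sum of independent centred Gaussians.
   Chebyshev's inequality bounds P(|S i| >= c i^(1 - p)) by O(i^(2p - 1)), which vanishes for
   p < 1/2.  The fourth moment E (S i)^4 = O(i^2) makes P(|S i| >= e i) summable, so by
   Borel-Cantelli S i / i -> 0 almost surely.  The projection of theta i is a finite combination
   of the coefficients with k <= r and inherits both limits. *)

theory Submission
  imports Defs
begin

section \<open>Simultaneous diagonalisation of the covariance recursion\<close>

lemma outer_mult_vec: "outer u v *v x = (v \<bullet> x) *\<^sub>R u"
  by (simp add: outer_def matrix_vector_mult_def inner_vec_def vec_eq_iff sum_distrib_left mult_ac)

lemma sum_matrix_vector_mult: "finite A \<Longrightarrow> (\<Sum>k\<in>A. f k) *v x = (\<Sum>k\<in>A. f k *v x)"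
  by (induction A rule: finite_induct) (auto simp: matrix_vector_mult_add_rdistrib)

lemma invertible_if_kernel_trivial:
  fixes A :: "real^'n^'n"
  assumes "\<And>x. A *v x = 0 \<Longrightarrow> x = 0"
  shows "invertible A"
  using assms matrix_left_invertible_ker invertible_left_inverse by blast

lemma matrix_inv_cancel:
  fixes A :: "real^'n^'n"
  assumes "invertible A"
  shows "A *v (matrix_inv A *v x) = x" and "matrix_inv A *v (A *v x) = x"
proof -
  have "A ** matrix_inv A = mat 1 \<and> matrix_inv A ** A = mat 1"
    using someI_ex[OF assms[unfolded invertible_def]] unfolding matrix_inv_def by auto
  then show "A *v (matrix_inv A *v x) = x" and "matrix_inv A *v (A *v x) = x"
    by (simp_all add: matrix_vector_mul_assoc)
qed

lemma spd_kernel: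
  fixes S :: "real^'n^'n"
  assumes "spd S" and "S *v x = 0"
  shows "x = 0"
  using assms unfolding spd_def by (metis inner_zero_right order_less_irrefl)

lemma spd_invertible: "spd S \<Longrightarrow> invertible S"
  using invertible_if_kernel_trivial spd_kernel by blast

text \<open>No hypothesis on \<open>J\<close> is needed: for \<open>J = 1\<close> the factor \<open>1 / (real J - 1)\<close> is
  \<open>1 / 0 = 0\<close>, and for \<open>J = 0\<close> the sum is empty.\<close>
lemma ens_cov_psd: "0 \<le> z \<bullet> (ens_cov J v *v z)"
proof -
  let ?u = "\<lambda>j. v j - ens_mean J v"
  have "ens_cov J v *v z = (1 / (real J - 1)) *\<^sub>R (\<Sum>j=1..J. (?u j \<bullet> z) *\<^sub>R ?u j)"
    by (simp add: ens_cov_def scaleR_matrix_vector_assoc[symmetric] sum_matrix_vector_mult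
        outer_mult_vec)
  then have "z \<bullet> (ens_cov J v *v z) = (1 / (real J - 1)) * (\<Sum>j=1..J. (?u j \<bullet> z)\<^sup>2)"
    by (simp add: inner_sum_right power2_eq_square inner_commute)
  also have "\<dots> \<ge> 0"
  proof (cases "J = 0")
    case False
    then have "0 \<le> real J - 1"
      by simp
    then show ?thesis
      by (intro mult_nonneg_nonneg sum_nonneg) simp_all
  qed simp
  finally show ?thesis .
qed

locale simultaneous_eigenbasis =
  fixes H :: "real^'d^'n" and S :: "real^'n^'n" and G :: "real^'d^'d"
    and w :: "nat \<Rightarrow> real^'n" and K :: "nat set"
  assumes spd: "spd S"
    and G_psd: "\<And>z. 0 \<le> z \<bullet> (G *v z)"
    and orthonormal: "\<And>k l. k \<in> K \<Longrightarrow> l \<in> K \<Longrightarrow>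
        w k \<bullet> (S *v w l) = (if k = l then 1 else 0)"
    and spanning: "span (w ` K) = UNIV"
    and eigenvector: "\<And>k i. k \<in> K \<Longrightarrow> \<exists>\<delta>. Cseq H S G i *v w k = \<delta> *\<^sub>R (S *v w k)"
begin

text \<open>By \<open>S\<close>-orthonormality this is the generalised eigenvalue of \<open>(Cseq H S G i, S)\<close> at
  \<open>w k\<close> (lemma \<open>Cseq_eigvec\<close>).\<close>
definition eigval :: "nat \<Rightarrow> nat \<Rightarrow> real" where
  "eigval i k = w k \<bullet> (Cseq H S G i *v w k)"

lemma Cseq_eigvec:
  assumes "k \<in> K"
  shows "Cseq H S G i *v w k = eigval i k *\<^sub>R (S *v w k)"
proof -
  obtain \<delta> where \<delta>: "Cseq H S G i *v w k = \<delta> *\<^sub>R (S *v w k)"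
    using eigenvector[OF assms] by blast
  then have "eigval i k = \<delta>"
    using orthonormal[OF assms assms] by (simp add: eigval_def)
  with \<delta> show ?thesis
    by simp
qed

lemma shifted_eigvec:
  "k \<in> K \<Longrightarrow> (Cseq H S G i + S) *v w k = (1 + eigval i k) *\<^sub>R (S *v w k)"
  by (simp add: Cseq_eigvec matrix_vector_mult_add_rdistrib algebra_simps)

lemma eigval_0_nonneg: "0 \<le> eigval 0 k"
proof -
  have "eigval 0 k = w k \<bullet> (H *v (G *v (transpose H *v w k)))"
    by (simp only: eigval_def Cseq.simps matrix_mul_assoc matrix_vector_mul_assoc)
  also have "\<dots> = (transpose H *v w k) \<bullet> (G *v (transpose H *v w k))"
    by (simp add: dot_lmul_matrix transpose_matrix_vector)
  also have "\<dots> \<ge> 0"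
    by (rule G_psd)
  finally show ?thesis .
qed

lemma coeff_shifted:
  assumes "k \<in> K"
  shows "w k \<bullet> ((Cseq H S G i + S) *v u) = (1 + eigval i k) * (w k \<bullet> (S *v u))"
proof (rule linear_eq_on_span[of "\<lambda>u. w k \<bullet> ((Cseq H S G i + S) *v u)"
      "\<lambda>u. (1 + eigval i k) * (w k \<bullet> (S *v u))" "w ` K"])
  show "linear (\<lambda>u. w k \<bullet> ((Cseq H S G i + S) *v u))"
    and "linear (\<lambda>u. (1 + eigval i k) * (w k \<bullet> (S *v u)))"
    by (intro linear_compose[OF matrix_vector_mul_linear, unfolded o_def] bounded_linear.linear
        bounded_linear_const_mult bounded_linear_inner_right)+
  show "w k \<bullet> ((Cseq H S G i + S) *v x) = (1 + eigval i k) * (w k \<bullet> (S *v x))"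
    if "x \<in> w ` K" for x
    using that assms by (auto simp: shifted_eigvec orthonormal)
qed (simp add: spanning)

lemma invertible_shifted:
  assumes "\<forall>k\<in>K. 0 \<le> eigval i k"
  shows "invertible (Cseq H S G i + S)"
proof (rule invertible_if_kernel_trivial)
  fix u assume u: "(Cseq H S G i + S) *v u = 0"
  have "w k \<bullet> (S *v u) = 0" if "k \<in> K" for k
    using coeff_shifted[OF that, of i u] assms that u by (simp add: add_nonneg_eq_0_iff)
  moreover have "linear (\<lambda>x. x \<bullet> (S *v u))"
    by (rule bounded_linear.linear[OF bounded_linear_inner_left])
  ultimately have "x \<bullet> (S *v u) = 0" for x
    using linear_eq_on_span[of "\<lambda>x. x \<bullet> (S *v u)" "\<lambda>_. 0" "w ` K" x] spanning linear_zero
    by auto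
  then have "S *v u = 0"
    by (metis inner_eq_zero_iff)
  then show "u = 0"
    by (rule spd_kernel[OF spd])
qed

lemma coeff_Mt_if_nonneg:
  assumes nonneg: "\<forall>k\<in>K. 0 \<le> eigval i k" and k: "k \<in> K"
  shows "w k \<bullet> (Mt H S G i *v x) = (w k \<bullet> x) / (1 + eigval i k)"
proof -
  let ?A = "Cseq H S G i + S"
  have "w k \<bullet> (Mt H S G i *v x) = w k \<bullet> (S *v (matrix_inv ?A *v x))"
    by (simp add: Mt_def matrix_vector_mul_assoc)
  also have "\<dots> = (w k \<bullet> (?A *v (matrix_inv ?A *v x))) / (1 + eigval i k)"
    using coeff_shifted[OF k] nonneg k by (simp add: add_nonneg_eq_0_iff)
  also have "\<dots> = (w k \<bullet> x) / (1 + eigval i k)"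
    by (simp add: matrix_inv_cancel invertible_shifted[OF nonneg])
  finally show ?thesis .
qed

lemma Cseq_Suc_apply: "Cseq H S G (Suc i) *v x = S *v x - Mt H S G i *v (S *v x)"
  by (simp add: Mt_def matrix_vector_mult_diff_rdistrib matrix_vector_mul_assoc matrix_mul_assoc)

lemma eigval_Suc_if_nonneg:
  assumes "\<forall>k\<in>K. 0 \<le> eigval i k" and k: "k \<in> K"
  shows "eigval (Suc i) k = eigval i k / (1 + eigval i k)"
proof -
  have "eigval (Suc i) k = 1 - 1 / (1 + eigval i k)"
    using coeff_Mt_if_nonneg[OF assms] orthonormal[OF k k]
    by (simp add: eigval_def Cseq_Suc_apply inner_diff_right del: Cseq.simps)
  also have "\<dots> = eigval i k / (1 + eigval i k)"
    using assms by (simp add: field_simps add_nonneg_eq_0_iff)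
  finally show ?thesis .
qed

lemma eigval_nonneg: "k \<in> K \<Longrightarrow> 0 \<le> eigval i k"
proof (induction i arbitrary: k)
  case 0
  show ?case
    by (rule eigval_0_nonneg)
next
  case (Suc i)
  then show ?case
    by (simp add: eigval_Suc_if_nonneg)
qed

lemma coeff_Mt: "k \<in> K \<Longrightarrow> w k \<bullet> (Mt H S G i *v x) = (w k \<bullet> x) / (1 + eigval i k)"
  by (simp add: coeff_Mt_if_nonneg eigval_nonneg)

lemma eigval_Suc: "k \<in> K \<Longrightarrow> eigval (Suc i) k = eigval i k / (1 + eigval i k)"
  by (simp add: eigval_Suc_if_nonneg eigval_nonneg)

lemma eigval_eq:
  assumes k: "k \<in> K" and pos: "0 < eigval 0 k"
  shows "eigval i k = eigval 0 k / (1 + real i * eigval 0 k)"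
proof (induction i)
  case (Suc i)
  define q where "q = 1 + real i * eigval 0 k"
  have "0 < q"
    using pos by (simp add: q_def add_pos_nonneg)
  have "eigval (Suc i) k = (eigval 0 k / q) / (1 + eigval 0 k / q)"
    by (simp add: eigval_Suc[OF k] Suc q_def)
  also have "\<dots> = eigval 0 k / (q + eigval 0 k)"
    using \<open>0 < q\<close> pos by (simp add: field_simps)
  also have "q + eigval 0 k = 1 + real (Suc i) * eigval 0 k"
    by (simp add: q_def algebra_simps)
  finally show ?case .
qed simp

lemma coeff_Mt_scaled:
  assumes k: "k \<in> K" and pos: "0 < eigval 0 k"
  shows "(1 + real (Suc i) * eigval 0 k) * (w k \<bullet> (Mt H S G i *v x)) =
    (1 + real i * eigval 0 k) * (w k \<bullet> x)"
proof -
  define q where "q = 1 + real i * eigval 0 k"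
  have "0 < q"
    using pos by (simp add: q_def add_pos_nonneg)
  have "1 + eigval i k = (q + eigval 0 k) / q"
    using \<open>0 < q\<close> by (simp add: eigval_eq[OF k pos, of i] q_def[symmetric] field_simps)
  moreover have "1 + real (Suc i) * eigval 0 k = q + eigval 0 k"
    by (simp add: q_def algebra_simps)
  ultimately show ?thesis
    using \<open>0 < q\<close> pos by (simp add: coeff_Mt[OF k] q_def[symmetric])
qed

lemma coeff_recursion:
  assumes rec: "\<And>i. x (Suc i) = Mt H S G i *v x i + (mat 1 - Mt H S G i) *v e i"
    and k: "k \<in> K" and pos: "0 < eigval 0 k"
  shows "w k \<bullet> x i =
    (w k \<bullet> x 0 + eigval 0 k * (\<Sum>l<i. w k \<bullet> e l)) / (1 + real i * eigval 0 k)"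
proof -
  \<comment> \<open>Scaled by \<open>1 + i * eigval 0 k\<close>, the coefficient just accumulates the noise.\<close>
  have "(1 + real i * eigval 0 k) * (w k \<bullet> x i) = w k \<bullet> x 0 + eigval 0 k * (\<Sum>l<i. w k \<bullet> e l)"
  proof (induction i)
    case (Suc i)
    have "w k \<bullet> x (Suc i) = w k \<bullet> (Mt H S G i *v x i) + w k \<bullet> e i - w k \<bullet> (Mt H S G i *v e i)"
      by (simp add: rec inner_add_right inner_diff_right matrix_vector_mult_diff_rdistrib)
    then have "(1 + real (Suc i) * eigval 0 k) * (w k \<bullet> x (Suc i)) =
        (1 + real i * eigval 0 k) * (w k \<bullet> x i) + (1 + real (Suc i) * eigval 0 k) * (w k \<bullet> e i)
        - (1 + real i * eigval 0 k) * (w k \<bullet> e i)"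
      by (simp only: distrib_left right_diff_distrib coeff_Mt_scaled[OF k pos])
    also have "\<dots> = (1 + real i * eigval 0 k) * (w k \<bullet> x i) + eigval 0 k * (w k \<bullet> e i)"
      by (simp add: algebra_simps)
    finally have "(1 + real (Suc i) * eigval 0 k) * (w k \<bullet> x (Suc i)) =
        (1 + real i * eigval 0 k) * (w k \<bullet> x i) + eigval 0 k * (w k \<bullet> e i)" .
    then show ?case
      by (simp add: Suc distrib_left)
  qed simp
  moreover have "0 < 1 + real i * eigval 0 k"
    using pos by (simp add: add_pos_nonneg)
  ultimately show ?thesis
    by (simp add: field_simps)
qed

end

section \<open>Moments of linear functionals of a Gaussian vector\<close>

lemma abs_power_le_one_plus_power:
  fixes x :: real
  assumes "k \<le> n"
  shows "\<bar>x\<bar> ^ k \<le> 1 + \<bar>x\<bar> ^ n"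
proof (cases "\<bar>x\<bar> \<le> 1")
  case True
  then have "\<bar>x\<bar> ^ k \<le> 1"
    by (simp add: power_le_one)
  then show ?thesis
    by (simp add: add_increasing2)
next
  case False
  then show ?thesis
    using assms by (simp add: add_increasing power_increasing)
qed

lemma lborel_integrable_scaleR:
  fixes f :: "'a::euclidean_space \<Rightarrow> real"
  assumes f: "integrable lborel f" and c: "c \<noteq> 0"
  shows "integrable lborel (\<lambda>x. f (c *\<^sub>R x))"
proof -
  have [measurable]: "f \<in> borel_measurable borel"
    using borel_measurable_integrable[OF f] by simp
  have [measurable]: "(\<lambda>x::'a. 0 + c *\<^sub>R x) \<in> borel \<rightarrow>\<^sub>M borel"
    by simp
  have "integrable
      (density (distr lborel borel (\<lambda>x::'a. 0 + c *\<^sub>R x)) (\<lambda>_. ennreal (\<bar>c\<bar> ^ DIM('a)))) f"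
    using f lborel_affine[OF c, of "0::'a"] by simp
  then have "integrable (distr lborel borel (\<lambda>x::'a. 0 + c *\<^sub>R x)) (\<lambda>x. \<bar>c\<bar> ^ DIM('a) *\<^sub>R f x)"
    by (subst (asm) integrable_density) auto
  then have "integrable lborel (\<lambda>x. \<bar>c\<bar> ^ DIM('a) * f (c *\<^sub>R x))"
    by (subst (asm) integrable_distr_eq) auto
  then show ?thesis
    using c by (simp add: integrable_mult_left_iff)
qed

lemma lborel_integral_uminus:
  fixes f :: "'a::euclidean_space \<Rightarrow> real"
  assumes [measurable]: "f \<in> borel_measurable borel"
  shows "(\<integral>x. f (- x) \<partial>lborel) = (\<integral>x. f x \<partial>lborel)"
proof -
  have [measurable]: "(\<lambda>x::'a. 0 + (-1) *\<^sub>R x) \<in> borel \<rightarrow>\<^sub>M borel"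
    by simp
  have "(\<integral>x. f x \<partial>lborel) =
      (\<integral>x. f x \<partial>density (distr lborel borel (\<lambda>x::'a. 0 + (-1) *\<^sub>R x))
        (\<lambda>_. ennreal (\<bar>-1::real\<bar> ^ DIM('a))))"
    using lborel_affine[of "-1" "0::'a"] by simp
  also have "\<dots> = (\<integral>x. f x \<partial>distr lborel borel (\<lambda>x::'a. 0 + (-1) *\<^sub>R x))"
    by (subst integral_density) auto
  also have "\<dots> = (\<integral>x. f (- x) \<partial>lborel)"
    by (subst integral_distr) auto
  finally show ?thesis
    by simp
qed

lemma spd_inverse_quadratic_pos:
  assumes "spd S" and "x \<noteq> 0"
  shows "0 < x \<bullet> (matrix_inv S *v x)"
proof -
  let ?y = "matrix_inv S *v x"
  have inv: "invertible S"
    using assms(1) by (rule spd_invertible)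
  then have "?y \<noteq> 0"
    using assms(2) matrix_inv_cancel(1)[OF inv, of x] by auto
  then have "0 < ?y \<bullet> (S *v ?y)"
    using assms(1) unfolding spd_def by blast
  then show ?thesis
    by (simp add: matrix_inv_cancel[OF inv] inner_commute)
qed

lemma spd_inverse_quadratic_lower_bound:
  assumes "spd S"
  obtains c where "0 < c" and "\<And>x. c * (norm x)\<^sup>2 \<le> x \<bullet> (matrix_inv S *v x)"
proof -
  let ?q = "\<lambda>x. x \<bullet> (matrix_inv S *v x)"
  have "continuous_on (sphere 0 1) ?q"
    by (intro continuous_intros linear_continuous_on matrix_vector_mul_linear)
  moreover have "sphere (0::real^'n) 1 \<noteq> {}"
    by simp
  ultimately obtain u where u: "u \<in> sphere 0 1" and min: "\<And>y. y \<in> sphere 0 1 \<Longrightarrow> ?q u \<le> ?q y"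
    using continuous_attains_inf[OF compact_sphere] by blast
  have "?q u * (norm x)\<^sup>2 \<le> ?q x" for x
  proof (cases "x = 0")
    case False
    then have "?q u \<le> ?q ((1 / norm x) *\<^sub>R x)"
      by (intro min) simp
    also have "\<dots> = ?q x / (norm x)\<^sup>2"
      by (simp add: matrix_vector_mult_scaleR power2_eq_square)
    finally show ?thesis
      using False by (simp add: le_divide_eq)
  qed simp
  moreover have "0 < ?q u"
    using u by (intro spd_inverse_quadratic_pos[OF assms]) auto
  ultimately show ?thesis
    using that by blast
qed

lemma exp_neg_bound_square:
  fixes t :: real
  assumes t: "0 \<le> t"
  shows "t\<^sup>2 * exp (- t) \<le> 2"
proof -
  have "t\<^sup>2 \<le> 2 * exp t"
    using exp_lower_Taylor_quadratic[OF t] t by simp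
  then show ?thesis
    by (simp add: exp_minus field_simps)
qed

context
  fixes S :: "real^'n^'n" and M :: "'a measure" and X :: "'a \<Rightarrow> real^'n"
  assumes S: "spd S" and M: "prob_space M"
    and X: "distributed M lborel X (\<lambda>x. ennreal (gauss_density S x))"
begin

text \<open>Positivity of the normalising constant (equivalently of \<open>det S\<close>) is read off from the
  density being the distribution of a random variable.\<close>
lemma gauss_normaliser_pos: "0 < sqrt ((2 * pi) ^ CARD('n) * det S)"
proof (rule ccontr)
  assume "\<not> ?thesis"
  then have "gauss_density S x \<le> 0" for x
    by (simp add: gauss_density_def divide_nonneg_nonpos)
  then have "(\<lambda>x. ennreal (gauss_density S x)) = (\<lambda>_. 0)"
    by (simp add: fun_eq_iff ennreal_eq_0_iff)
  then have "distr M lborel X = density lborel (\<lambda>_. 0)"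
    using distributed_distr_eq_density[OF X] by simp
  moreover have "emeasure (distr M lborel X) (space lborel) = 1"
    using distributed_measurable[OF X] prob_space.emeasure_space_1[OF M]
    by (simp add: emeasure_distr)
  ultimately show False
    by (simp add: emeasure_density)
qed

lemma gauss_density_pos: "0 < gauss_density S x"
  using gauss_normaliser_pos by (simp add: gauss_density_def)

lemma gauss_density_borel[measurable]: "gauss_density S \<in> borel_measurable borel"
  unfolding gauss_density_def using gauss_normaliser_pos
  by (intro borel_measurable_continuous_onI continuous_intros linear_continuous_on
      matrix_vector_mul_linear) auto

lemma integrable_gauss_density: "integrable lborel (gauss_density S)"
proof -
  have "integrable M (\<lambda>_. 1::real)"
    using M by (simp add: prob_space_def finite_measure.integrable_const)
  moreover have "integrable lborel (\<lambda>x. gauss_density S x * 1) \<longleftrightarrow> integrable M (\<lambda>_. 1::real)"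
    by (rule distributed_integrable[OF X]) (auto intro: less_imp_le gauss_density_pos)
  ultimately show ?thesis
    by simp
qed

text \<open>\<open>g x * \<parallel>x\<parallel>^4\<close> is dominated by a multiple of the wider Gaussian \<open>g (x / sqrt 2)\<close>,
  which is integrable by rescaling.\<close>
lemma gauss_density_fourth_moment_bound:
  obtains C where "\<And>x. gauss_density S x * (norm x) ^ 4 \<le> C * gauss_density S ((1 / sqrt 2) *\<^sub>R x)"
proof -
  obtain c where "0 < c" and c: "\<And>x. c * (norm x)\<^sup>2 \<le> x \<bullet> (matrix_inv S *v x)"
    using spd_inverse_quadratic_lower_bound[OF S] by blast
  have "gauss_density S x * (norm x) ^ 4 \<le> 32 / c\<^sup>2 * gauss_density S ((1 / sqrt 2) *\<^sub>R x)" for x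
  proof -
    define t where "t = c * (norm x)\<^sup>2 / 4"
    have "0 \<le> t"
      using \<open>0 < c\<close> by (simp add: t_def)
    have "exp (- (x \<bullet> (matrix_inv S *v x)) / 4) \<le> exp (- t)"
      using c[of x] by (simp add: t_def)
    then have "(norm x) ^ 4 * exp (- (x \<bullet> (matrix_inv S *v x)) / 4) \<le> 16 / c\<^sup>2 * (t\<^sup>2 * exp (- t))"
      using \<open>0 < c\<close> by (simp add: t_def power2_eq_square power4_eq_xxxx field_simps mult_left_mono)
    also have "\<dots> \<le> 16 / c\<^sup>2 * 2"
      using exp_neg_bound_square[OF \<open>0 \<le> t\<close>] by (intro mult_left_mono) auto
    also have "\<dots> = 32 / c\<^sup>2"
      by simp
    finally have bound: "(norm x) ^ 4 * exp (- (x \<bullet> (matrix_inv S *v x)) / 4) \<le> 32 / c\<^sup>2" .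
    have "gauss_density S x * (norm x) ^ 4 =
        gauss_density S ((1 / sqrt 2) *\<^sub>R x) *
          ((norm x) ^ 4 * exp (- (x \<bullet> (matrix_inv S *v x)) / 4))"
      by (simp add: gauss_density_def matrix_vector_mult_scaleR power_divide field_simps
          exp_add[symmetric])
    also have "\<dots> \<le> gauss_density S ((1 / sqrt 2) *\<^sub>R x) * (32 / c\<^sup>2)"
      using bound gauss_density_pos by (intro mult_left_mono) (auto intro: less_imp_le)
    finally show ?thesis
      by (simp add: mult.commute)
  qed
  then show ?thesis
    using that by blast
qed

lemma integrable_gauss_density_moment:
  assumes "k \<le> 4"
  shows "integrable lborel (\<lambda>x. gauss_density S x * (u \<bullet> x) ^ k)"
proof -
  obtain C where C: "\<And>x. gauss_density S x * (norm x) ^ 4 \<le> C * gauss_density S ((1 / sqrt 2) *\<^sub>R x)"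
    using gauss_density_fourth_moment_bound by blast
  let ?bound = "\<lambda>x. gauss_density S x + (norm u) ^ 4 * (C * gauss_density S ((1 / sqrt 2) *\<^sub>R x))"
  have bound: "\<bar>gauss_density S x * (u \<bullet> x) ^ k\<bar> \<le> ?bound x" for x
  proof -
    have g: "0 < gauss_density S x"
      by (rule gauss_density_pos)
    have "\<bar>u \<bullet> x\<bar> ^ 4 \<le> (norm u * norm x) ^ 4"
      by (intro power_mono Cauchy_Schwarz_ineq2) simp
    then have "\<bar>(u \<bullet> x) ^ k\<bar> \<le> 1 + (norm u) ^ 4 * (norm x) ^ 4"
      using abs_power_le_one_plus_power[OF assms, of "u \<bullet> x"]
      by (simp add: power_abs power_mult_distrib)
    then have "gauss_density S x * \<bar>(u \<bullet> x) ^ k\<bar> \<le>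
        gauss_density S x * (1 + (norm u) ^ 4 * (norm x) ^ 4)"
      using g by (intro mult_left_mono) auto
    also have "\<dots> = gauss_density S x + (norm u) ^ 4 * (gauss_density S x * (norm x) ^ 4)"
      by (simp add: algebra_simps)
    also have "\<dots> \<le> ?bound x"
      using C[of x] by (intro add_left_mono mult_left_mono) auto
    finally show ?thesis
      using g by (simp add: abs_mult)
  qed
  show ?thesis
  proof (rule Bochner_Integration.integrable_bound)
    show "integrable lborel ?bound"
      using integrable_gauss_density lborel_integrable_scaleR[OF integrable_gauss_density] by simp
    show "AE x in lborel. norm (gauss_density S x * (u \<bullet> x) ^ k) \<le> norm (?bound x)"
      using bound by (auto intro: order_trans[OF _ abs_ge_self])
  qed simp
qed

lemma gauss_density_first_moment: "(\<integral>x. gauss_density S x * (u \<bullet> x) \<partial>lborel) = 0"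
proof -
  have "gauss_density S (- x) = gauss_density S x" for x
    by (simp add: gauss_density_def vec.neg)
  then have "(\<integral>x. gauss_density S x * (u \<bullet> x) \<partial>lborel) =
      - (\<integral>x. gauss_density S x * (u \<bullet> x) \<partial>lborel)"
    using lborel_integral_uminus[of "\<lambda>x. gauss_density S x * (u \<bullet> x)"] by simp
  then show ?thesis
    by simp
qed

end

section \<open>Partial sums of independent centred variables with bounded fourth moments\<close>

lemma (in prob_space) prob_abs_ge_le_moment:
  fixes X :: "'a \<Rightarrow> real"
  assumes [measurable]: "X \<in> borel_measurable M"
    and k: "even k" "0 < k" and int: "integrable M (\<lambda>\<omega>. X \<omega> ^ k)" and t: "0 < t"
  shows "prob {\<omega> \<in> space M. t \<le> \<bar>X \<omega>\<bar>} \<le> expectation (\<lambda>\<omega>. X \<omega> ^ k) / t ^ k"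
proof -
  have "t \<le> \<bar>x\<bar> \<longleftrightarrow> t ^ k \<le> x ^ k" for x
    using power_mono_iff[of t "\<bar>x\<bar>" k] t k by (simp add: power_even_abs)
  then have "{\<omega> \<in> space M. t \<le> \<bar>X \<omega>\<bar>} = {\<omega> \<in> space M. t ^ k \<le> X \<omega> ^ k}"
    by simp
  also have "prob \<dots> \<le> expectation (\<lambda>\<omega>. X \<omega> ^ k) / t ^ k"
    using int t k by (intro integral_Markov_inequality_measure[where A = "space M"]) auto
  finally show ?thesis .
qed

lemma (in prob_space) integrable_power_le:
  fixes X :: "'a \<Rightarrow> real"
  assumes [measurable]: "X \<in> borel_measurable M"
    and int: "integrable M (\<lambda>\<omega>. X \<omega> ^ n)" and "even n" and "k \<le> n"
  shows "integrable M (\<lambda>\<omega>. X \<omega> ^ k)"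
proof (rule Bochner_Integration.integrable_bound)
  show "integrable M (\<lambda>\<omega>. 1 + X \<omega> ^ n)"
    using int by simp
  have "\<bar>X \<omega> ^ k\<bar> \<le> 1 + X \<omega> ^ n" for \<omega>
    using abs_power_le_one_plus_power[OF \<open>k \<le> n\<close>] \<open>even n\<close> by (simp add: power_abs power_even_abs)
  then show "AE \<omega> in M. norm (X \<omega> ^ k) \<le> norm (1 + X \<omega> ^ n)"
    using \<open>even n\<close> by (auto intro: order_trans[OF _ abs_ge_self])
qed measurable

lemma (in prob_space) indep_var_power_mult:
  fixes X Y :: "'a \<Rightarrow> real"
  assumes ind: "indep_var borel X borel Y"
    and iX: "integrable M (\<lambda>\<omega>. X \<omega> ^ a)" and iY: "integrable M (\<lambda>\<omega>. Y \<omega> ^ b)"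
  shows "integrable M (\<lambda>\<omega>. X \<omega> ^ a * Y \<omega> ^ b)"
    and "expectation (\<lambda>\<omega>. X \<omega> ^ a * Y \<omega> ^ b) =
      expectation (\<lambda>\<omega>. X \<omega> ^ a) * expectation (\<lambda>\<omega>. Y \<omega> ^ b)"
proof -
  have "indep_var borel (\<lambda>\<omega>. X \<omega> ^ a) borel (\<lambda>\<omega>. Y \<omega> ^ b)"
    using indep_var_compose[OF ind, of "\<lambda>x. x ^ a" borel "\<lambda>x. x ^ b" borel] by (simp add: comp_def)
  then show "integrable M (\<lambda>\<omega>. X \<omega> ^ a * Y \<omega> ^ b)"
    and "expectation (\<lambda>\<omega>. X \<omega> ^ a * Y \<omega> ^ b) =
      expectation (\<lambda>\<omega>. X \<omega> ^ a) * expectation (\<lambda>\<omega>. Y \<omega> ^ b)"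
    using iX iY by (simp_all add: indep_var_integrable indep_var_lebesgue_integral)
qed

lemma (in prob_space) indep_sets_reindex:
  assumes ind: "indep_sets F (f ` I)" and inj: "inj_on f I"
  shows "indep_sets (\<lambda>i. F (f i)) I"
  unfolding indep_sets_def
proof (intro conjI ballI allI impI)
  show "F (f i) \<subseteq> events" if "i \<in> I" for i
    using ind that unfolding indep_sets_def by blast
next
  fix J A assume J: "J \<subseteq> I" "J \<noteq> {}" "finite J" and A: "A \<in> Pi J (\<lambda>i. F (f i))"
  have injJ: "inj_on f J"
    using inj J(1) by (rule inj_on_subset)
  define B where "B x = A (the_inv_into J f x)" for x
  have B: "B (f j) = A j" if "j \<in> J" for j
    unfolding B_def using the_inv_into_f_f[OF injJ that] by simp
  have "B \<in> Pi (f ` J) F" and "f ` J \<subseteq> f ` I" "f ` J \<noteq> {}" "finite (f ` J)"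
    using A B J by auto
  then have "prob (\<Inter>x\<in>f ` J. B x) = (\<Prod>x\<in>f ` J. prob (B x))"
    using ind unfolding indep_sets_def by blast
  moreover have "(\<Inter>x\<in>f ` J. B x) = (\<Inter>j\<in>J. A j)"
    using B by auto
  moreover have "(\<Prod>x\<in>f ` J. prob (B x)) = (\<Prod>j\<in>J. prob (A j))"
    using prod.reindex[OF injJ, of "\<lambda>x. prob (B x)"] B by simp
  ultimately show "prob (\<Inter>j\<in>J. A j) = (\<Prod>j\<in>J. prob (A j))"
    by simp
qed

lemma (in prob_space) indep_vars_reindex:
  assumes "indep_vars M' X (f ` I)" and "inj_on f I"
  shows "indep_vars (\<lambda>i. M' (f i)) (\<lambda>i. X (f i)) I"
  using assms unfolding indep_vars_def
  by (auto intro: indep_sets_reindex[OF _ assms(2),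
        of "\<lambda>i. sigma_sets (space M) {X i -` A \<inter> space M |A. A \<in> sets (M' i)}"])

lemma (in prob_space) indep_vars_column:
  assumes "indep_vars (\<lambda>_. N) (\<lambda>(i, j). X i j) (UNIV \<times> B)" and "j \<in> B"
  shows "indep_vars (\<lambda>_. N) (\<lambda>i. X i j) UNIV"
proof -
  have "indep_vars (\<lambda>_. N) (\<lambda>(i, j). X i j) ((\<lambda>i. (i, j)) ` UNIV)"
    by (rule indep_vars_subset[OF assms(1)]) (use assms(2) in auto)
  then have "indep_vars (\<lambda>_. N) (\<lambda>i. (\<lambda>(i, j). X i j) (i, j)) UNIV"
    by (rule indep_vars_reindex) (simp add: inj_on_def)
  then show ?thesis
    by simp
qed

lemma div_square_powr_eq:
  fixes x s c p :: real
  assumes "1 \<le> x" and "0 < c"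
  shows "x * s / (c / 2 * x powr (1 - p))\<^sup>2 = 4 * s / c\<^sup>2 * x powr (2 * p - 1)"
proof -
  have "0 < x powr (1 - p)"
    using assms by simp
  then have "x * s / (c / 2 * x powr (1 - p))\<^sup>2 = 4 * s / c\<^sup>2 * (x / (x powr (1 - p))\<^sup>2)"
    using assms by (simp add: power_mult_distrib field_simps)
  also have "(x powr (1 - p))\<^sup>2 = x powr (2 - 2 * p)"
    by (simp add: power2_eq_square powr_add[symmetric] algebra_simps)
  also have "x / x powr (2 - 2 * p) = x powr (2 * p - 1)"
    using assms powr_diff[of x 1 "2 - 2 * p"] by simp
  finally show ?thesis .
qed

locale indep_centered_seq = prob_space +
  fixes Z :: "nat \<Rightarrow> 'a \<Rightarrow> real" and s2 m4 :: real
  assumes indep: "indep_vars (\<lambda>_. borel) Z UNIV"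
    and integrable_fourth: "\<And>l. integrable M (\<lambda>\<omega>. Z l \<omega> ^ 4)"
    and mean_zero: "\<And>l. expectation (Z l) = 0"
    and second_moment_le: "\<And>l. expectation (\<lambda>\<omega>. Z l \<omega> ^ 2) \<le> s2"
    and fourth_moment_le: "\<And>l. expectation (\<lambda>\<omega>. Z l \<omega> ^ 4) \<le> m4"
begin

abbreviation partial_sum :: "nat \<Rightarrow> 'a \<Rightarrow> real" where
  "partial_sum i \<omega> \<equiv> \<Sum>l<i. Z l \<omega>"

lemma measurable_Z[measurable]: "Z l \<in> borel_measurable M"
  using indep unfolding indep_vars_def by auto

lemma integrable_Z_power: "k \<le> 4 \<Longrightarrow> integrable M (\<lambda>\<omega>. Z l \<omega> ^ k)"
  by (rule integrable_power_le[OF measurable_Z integrable_fourth]) auto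

lemma s2_nonneg: "0 \<le> s2"
proof -
  have "0 \<le> expectation (\<lambda>\<omega>. Z 0 \<omega> ^ 2)"
    by (intro integral_nonneg_AE) auto
  then show ?thesis
    using second_moment_le[of 0] by linarith
qed

lemma m4_nonneg: "0 \<le> m4"
proof -
  have "0 \<le> expectation (\<lambda>\<omega>. Z 0 \<omega> ^ 4)"
    by (intro integral_nonneg_AE) (auto simp: zero_le_even_power)
  then show ?thesis
    using fourth_moment_le[of 0] by linarith
qed

lemma indep_partial_sum: "indep_var borel (Z i) borel (partial_sum i)"
  by (rule indep_vars_sum) (auto intro: indep_vars_subset[OF indep])

lemma integrable_partial_sum_fourth: "integrable M (\<lambda>\<omega>. partial_sum i \<omega> ^ 4)"
proof (induction i)
  case (Suc i)
  have mixed: "integrable M (\<lambda>\<omega>. partial_sum i \<omega> ^ a * Z i \<omega> ^ b)" if "a \<le> 4" "b \<le> 4" for a b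
    using indep_var_power_mult(1)[OF indep_partial_sum integrable_Z_power
        integrable_power_le[OF _ Suc]]
      that by (simp add: mult.commute)
  have expand: "partial_sum (Suc i) \<omega> ^ 4 = partial_sum i \<omega> ^ 4 * Z i \<omega> ^ 0
      + 4 * (partial_sum i \<omega> ^ 3 * Z i \<omega> ^ 1) + 6 * (partial_sum i \<omega> ^ 2 * Z i \<omega> ^ 2)
      + 4 * (partial_sum i \<omega> ^ 1 * Z i \<omega> ^ 3) + partial_sum i \<omega> ^ 0 * Z i \<omega> ^ 4" for \<omega>
    by (simp add: algebra_simps power_def numeral_eq_Suc)
  show ?case
    unfolding expand by (intro Bochner_Integration.integrable_add integrable_mult_right mixed) auto
qed simp

lemma integrable_partial_sum_power: "k \<le> 4 \<Longrightarrow> integrable M (\<lambda>\<omega>. partial_sum i \<omega> ^ k)"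
  by (rule integrable_power_le[OF _ integrable_partial_sum_fourth]) auto

lemma partial_sum_mixed_moment:
  assumes "a \<le> 4" and "b \<le> 4"
  shows "integrable M (\<lambda>\<omega>. partial_sum i \<omega> ^ a * Z i \<omega> ^ b)"
    and "expectation (\<lambda>\<omega>. partial_sum i \<omega> ^ a * Z i \<omega> ^ b) =
      expectation (\<lambda>\<omega>. partial_sum i \<omega> ^ a) * expectation (\<lambda>\<omega>. Z i \<omega> ^ b)"
  using indep_var_power_mult[OF indep_partial_sum integrable_Z_power integrable_partial_sum_power]
    assms
  by (simp_all add: mult.commute)

lemma expectation_partial_sum: "expectation (partial_sum i) = 0"
  using integrable_Z_power[of 1] by (simp add: mean_zero)

lemma partial_sum_second_moment: "expectation (\<lambda>\<omega>. partial_sum i \<omega> ^ 2) \<le> real i * s2"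
proof (induction i)
  case (Suc i)
  have "partial_sum (Suc i) \<omega> ^ 2 =
      partial_sum i \<omega> ^ 2 + 2 * (partial_sum i \<omega> ^ 1 * Z i \<omega> ^ 1) + Z i \<omega> ^ 2" for \<omega>
    by (simp add: algebra_simps power2_eq_square)
  then have "expectation (\<lambda>\<omega>. partial_sum (Suc i) \<omega> ^ 2) =
      expectation (\<lambda>\<omega>. partial_sum i \<omega> ^ 2) + expectation (\<lambda>\<omega>. Z i \<omega> ^ 2)"
    using partial_sum_mixed_moment[of 1 1 i] integrable_partial_sum_power[of 2 i]
      integrable_Z_power[of 2 i]
    by (simp add: mean_zero del: power_one_right)
  also have "\<dots> \<le> real (Suc i) * s2"
    using Suc second_moment_le[of i] by (simp add: algebra_simps)
  finally show ?case .
qed simp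

lemma partial_sum_fourth_moment:
  "expectation (\<lambda>\<omega>. partial_sum i \<omega> ^ 4) \<le> real i * m4 + 3 * (real i)\<^sup>2 * s2\<^sup>2"
proof (induction i)
  case (Suc i)
  have "partial_sum (Suc i) \<omega> ^ 4 = partial_sum i \<omega> ^ 4 + 4 * (partial_sum i \<omega> ^ 3 * Z i \<omega> ^ 1)
      + 6 * (partial_sum i \<omega> ^ 2 * Z i \<omega> ^ 2) + 4 * (partial_sum i \<omega> ^ 1 * Z i \<omega> ^ 3) + Z i \<omega> ^ 4"
    for \<omega>
    by (simp add: algebra_simps power_def numeral_eq_Suc)
  then have "expectation (\<lambda>\<omega>. partial_sum (Suc i) \<omega> ^ 4) =
      expectation (\<lambda>\<omega>. partial_sum i \<omega> ^ 4)
      + 6 * (expectation (\<lambda>\<omega>. partial_sum i \<omega> ^ 2) * expectation (\<lambda>\<omega>. Z i \<omega> ^ 2))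
      + expectation (\<lambda>\<omega>. Z i \<omega> ^ 4)"
    using partial_sum_mixed_moment[of 3 1 i] partial_sum_mixed_moment[of 2 2 i]
      partial_sum_mixed_moment[of 1 3 i] integrable_partial_sum_power[of 4 i]
      integrable_Z_power[of 4 i]
    by (simp add: mean_zero expectation_partial_sum del: power_one_right)
  also have "\<dots> \<le> (real i * m4 + 3 * (real i)\<^sup>2 * s2\<^sup>2) + 6 * (real i * s2 * s2) + m4"
    using Suc fourth_moment_le[of i] s2_nonneg
    by (intro add_mono mult_left_mono mult_mono partial_sum_second_moment second_moment_le)
      (auto intro: integral_nonneg_AE)
  also have "\<dots> \<le> real (Suc i) * m4 + 3 * (real (Suc i))\<^sup>2 * s2\<^sup>2"
    by (simp add: algebra_simps power2_eq_square)
  finally show ?case .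
qed simp

lemma partial_sum_tail_second:
  assumes "0 < t"
  shows "prob {\<omega> \<in> space M. t \<le> \<bar>partial_sum i \<omega>\<bar>} \<le> real i * s2 / t\<^sup>2"
proof -
  have "prob {\<omega> \<in> space M. t \<le> \<bar>partial_sum i \<omega>\<bar>} \<le> expectation (\<lambda>\<omega>. partial_sum i \<omega> ^ 2) / t\<^sup>2"
    using assms integrable_partial_sum_power[of 2 i] by (intro prob_abs_ge_le_moment) auto
  also have "\<dots> \<le> real i * s2 / t\<^sup>2"
    by (intro divide_right_mono partial_sum_second_moment) simp
  finally show ?thesis .
qed

lemma partial_sum_tail_fourth:
  assumes "0 < t"
  shows "prob {\<omega> \<in> space M. t \<le> \<bar>partial_sum i \<omega>\<bar>} \<le>
    (real i * m4 + 3 * (real i)\<^sup>2 * s2\<^sup>2) / t ^ 4"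
proof -
  have "prob {\<omega> \<in> space M. t \<le> \<bar>partial_sum i \<omega>\<bar>} \<le> expectation (\<lambda>\<omega>. partial_sum i \<omega> ^ 4) / t ^ 4"
    using assms integrable_partial_sum_fourth[of i] by (intro prob_abs_ge_le_moment) auto
  also have "\<dots> \<le> (real i * m4 + 3 * (real i)\<^sup>2 * s2\<^sup>2) / t ^ 4"
    by (intro divide_right_mono partial_sum_fourth_moment) simp
  finally show ?thesis .
qed

text \<open>The fourth-moment tail bound is summable along \<open>t = e * i\<close>, so Borel--Cantelli applies.\<close>
lemma AE_eventually_partial_sum_less:
  assumes "0 < e"
  shows "AE \<omega> in M. eventually (\<lambda>i. \<bar>partial_sum i \<omega>\<bar> < e * real i) sequentially"
proof -
  define A where "A i = {\<omega> \<in> space M. e * real i \<le> \<bar>partial_sum i \<omega>\<bar>}" for i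
  have A_sets: "A i \<in> sets M" for i
    unfolding A_def by measurable
  define C where "C = (m4 + 3 * s2\<^sup>2) / e ^ 4"
  have bound: "norm (prob (A i)) \<le> C * inverse (real i ^ 2)" if "1 \<le> i" for i
  proof -
    have "prob (A i) \<le> (real i * m4 + 3 * (real i)\<^sup>2 * s2\<^sup>2) / (e * real i) ^ 4"
      unfolding A_def using assms that by (intro partial_sum_tail_fourth) simp
    also have "\<dots> \<le> (real i)\<^sup>2 * (m4 + 3 * s2\<^sup>2) / (e * real i) ^ 4"
    proof (rule divide_right_mono)
      have "real i * m4 \<le> (real i)\<^sup>2 * m4"
        using that m4_nonneg by (intro mult_right_mono) (auto simp: power2_eq_square)
      then show "real i * m4 + 3 * (real i)\<^sup>2 * s2\<^sup>2 \<le> (real i)\<^sup>2 * (m4 + 3 * s2\<^sup>2)"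
        by (simp add: algebra_simps)
    qed simp
    also have "\<dots> = C * inverse (real i ^ 2)"
      using assms that
      by (simp add: C_def power_mult_distrib field_simps power2_eq_square power4_eq_xxxx)
    finally show ?thesis
      by simp
  qed
  have "summable (\<lambda>i. C * inverse (real i ^ 2))"
    by (intro summable_mult inverse_power_summable) simp
  then have "summable (\<lambda>i. prob (A i))"
    by (rule summable_comparison_test'[where N = 1]) (use bound in auto)
  then have "AE \<omega> in M. eventually (\<lambda>i. \<omega> \<in> space M - A i) sequentially"
    by (intro borel_cantelli_AE1 A_sets) (simp add: emeasure_eq_measure)
  then show ?thesis
    by (rule AE_mp) (auto simp: A_def elim!: eventually_mono)
qed

lemma AE_partial_sum_average_tendsto_0:
  "AE \<omega> in M. (\<lambda>i. partial_sum i \<omega> / real i) \<longlonglongrightarrow> 0"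
proof -
  have "AE \<omega> in M. \<forall>m. eventually (\<lambda>i. \<bar>partial_sum i \<omega>\<bar> < real i / Suc m) sequentially"
    unfolding AE_all_countable
    using AE_eventually_partial_sum_less[of "1 / Suc _"] by (simp add: field_simps)
  then show ?thesis
  proof (rule AE_mp, intro AE_I2 impI)
    fix \<omega> assume \<omega>: "\<forall>m. eventually (\<lambda>i. \<bar>partial_sum i \<omega>\<bar> < real i / Suc m) sequentially"
    show "(\<lambda>i. partial_sum i \<omega> / real i) \<longlonglongrightarrow> 0"
    proof (rule tendsto_iff[THEN iffD2], intro allI impI)
      fix r :: real assume "0 < r"
      then obtain m where m: "inverse (real (Suc m)) < r"
        using reals_Archimedean by blast
      show "eventually (\<lambda>i. dist (partial_sum i \<omega> / real i) 0 < r) sequentially"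
        using \<omega>[rule_format, of m] eventually_ge_at_top[of 1]
      proof eventually_elim
        case (elim i)
        then have "\<bar>partial_sum i \<omega>\<bar> / real i < inverse (real (Suc m))"
          by (simp add: divide_less_eq field_simps)
        then show ?case
          using m by simp
      qed
    qed
  qed
qed

lemma eventually_coeff_ge_imp_partial_sum_ge:
  fixes a c d p :: real
  assumes "0 < c" and "0 < d" and "p < 1"
  shows "eventually (\<lambda>i. \<forall>s. c / real i powr p \<le> \<bar>(a + d * s) / (1 + real i * d)\<bar> \<longrightarrow>
    c / 2 * real i powr (1 - p) \<le> \<bar>s\<bar>) sequentially"
proof -
  have "(\<lambda>i. 2 * \<bar>a\<bar> * real i powr (p - 1)) \<longlonglongrightarrow> 0"
    using assms by (intro tendsto_mult_right_zero tendsto_neg_powr filterlim_real_sequentially) simp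
  then have "eventually (\<lambda>i. 2 * \<bar>a\<bar> * real i powr (p - 1) < c * d) sequentially"
    by (rule order_tendstoD(2)) (use assms in simp)
  then show ?thesis
    using eventually_ge_at_top[of 1]
  proof eventually_elim
    case (elim i)
    define x where "x = real i"
    have "1 \<le> x" "0 < x powr p"
      using elim by (simp_all add: x_def)
    have "2 * \<bar>a\<bar> * x powr p = 2 * \<bar>a\<bar> * x powr (p - 1) * x"
      using \<open>1 \<le> x\<close> by (simp add: powr_diff)
    also have "\<dots> \<le> c * d * x"
      using elim \<open>1 \<le> x\<close> by (simp add: x_def)
    finally have "\<bar>a\<bar> / (x * d) \<le> c / (2 * x powr p)"
      using \<open>1 \<le> x\<close> \<open>0 < x powr p\<close> assms by (simp add: field_simps)
    moreover have "\<bar>a\<bar> / (1 + x * d) \<le> \<bar>a\<bar> / (x * d)"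
      using \<open>1 \<le> x\<close> assms by (intro divide_left_mono mult_pos_pos add_pos_pos) auto
    ultimately have small: "\<bar>a\<bar> / (1 + x * d) \<le> c / (2 * x powr p)"
      by linarith
    show ?case
    proof (intro allI impI)
      fix s assume le: "c / real i powr p \<le> \<bar>(a + d * s) / (1 + real i * d)\<bar>"
      have "0 < x * d"
        using \<open>1 \<le> x\<close> assms by simp
      have "\<bar>(a + d * s) / (1 + x * d)\<bar> \<le> \<bar>a\<bar> / (1 + x * d) + d * \<bar>s\<bar> / (1 + x * d)"
        using \<open>0 < x * d\<close> assms abs_triangle_ineq[of a "d * s"]
        by (simp add: abs_mult add_divide_distrib[symmetric] divide_right_mono)
      moreover have "d * \<bar>s\<bar> / (1 + x * d) \<le> d * \<bar>s\<bar> / (x * d)"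
        using \<open>0 < x * d\<close> \<open>1 \<le> x\<close> assms by (intro divide_left_mono mult_pos_pos add_pos_pos) auto
      ultimately have "c / x powr p \<le> c / (2 * x powr p) + \<bar>s\<bar> / x"
        using le small assms by (simp add: x_def)
      then have "c / (2 * x powr p) \<le> \<bar>s\<bar> / x"
        by (simp add: field_simps)
      then have "c / 2 * (x / x powr p) \<le> \<bar>s\<bar>"
        using \<open>1 \<le> x\<close> by (simp add: field_simps)
      then show "c / 2 * real i powr (1 - p) \<le> \<bar>s\<bar>"
        using \<open>1 \<le> x\<close> by (simp add: x_def powr_diff)
    qed
  qed
qed

lemma prob_coeff_ge_tendsto_0:
  assumes "0 < c" and "0 < d" and "0 < p" and "p < 1 / 2"
  shows "(\<lambda>i. prob {\<omega> \<in> space M.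
    c / real i powr p \<le> \<bar>(a + d * partial_sum i \<omega>) / (1 + real i * d)\<bar>}) \<longlonglongrightarrow> 0"
proof (rule tendsto_sandwich[OF _ _ tendsto_const])
  have "p < 1"
    using assms by simp
  show "eventually (\<lambda>i. prob {\<omega> \<in> space M.
      c / real i powr p \<le> \<bar>(a + d * partial_sum i \<omega>) / (1 + real i * d)\<bar>}
      \<le> 4 * s2 / c\<^sup>2 * real i powr (2 * p - 1)) sequentially"
    using eventually_coeff_ge_imp_partial_sum_ge[OF \<open>0 < c\<close> \<open>0 < d\<close> \<open>p < 1\<close>, of a]
      eventually_ge_at_top[of 1]
  proof eventually_elim
    case (elim i)
    have "0 < c / 2 * real i powr (1 - p)"
      using elim \<open>0 < c\<close> by simp
    have "prob {\<omega> \<in> space M. c / real i powr p \<le> \<bar>(a + d * partial_sum i \<omega>) / (1 + real i * d)\<bar>}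
        \<le> prob {\<omega> \<in> space M. c / 2 * real i powr (1 - p) \<le> \<bar>partial_sum i \<omega>\<bar>}"
      using elim by (intro finite_measure_mono) auto
    also have "\<dots> \<le> real i * s2 / (c / 2 * real i powr (1 - p))\<^sup>2"
      using partial_sum_tail_second[OF \<open>0 < c / 2 * real i powr (1 - p)\<close>] .
    also have "\<dots> = 4 * s2 / c\<^sup>2 * real i powr (2 * p - 1)"
      by (rule div_square_powr_eq) (use elim \<open>0 < c\<close> in simp_all)
    finally show ?case .
  qed
  have "(\<lambda>i. real i powr (2 * p - 1)) \<longlonglongrightarrow> 0"
    using assms by (intro tendsto_neg_powr filterlim_real_sequentially) simp
  then show "(\<lambda>i. 4 * s2 / c\<^sup>2 * real i powr (2 * p - 1)) \<longlonglongrightarrow> 0"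
    by (rule tendsto_mult_right_zero)
qed simp

lemma AE_coeff_tendsto_0:
  assumes "0 < d"
  shows "AE \<omega> in M. (\<lambda>i. (a + d * partial_sum i \<omega>) / (1 + real i * d)) \<longlonglongrightarrow> 0"
  using AE_partial_sum_average_tendsto_0
proof (rule AE_mp, intro AE_I2 impI)
  fix \<omega> assume avg: "(\<lambda>i. partial_sum i \<omega> / real i) \<longlonglongrightarrow> 0"
  have "(\<lambda>i. (a * inverse (real i) + d * (partial_sum i \<omega> / real i)) / (inverse (real i) + d))
      \<longlonglongrightarrow> (a * 0 + d * 0) / (0 + d)"
    using assms
    by (intro tendsto_intros avg tendsto_inverse_0_at_top filterlim_real_sequentially) auto
  moreover have "eventually (\<lambda>i.
      (a * inverse (real i) + d * (partial_sum i \<omega> / real i)) / (inverse (real i) + d) =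
      (a + d * partial_sum i \<omega>) / (1 + real i * d)) sequentially"
    using eventually_ge_at_top[of 1]
  proof eventually_elim
    case (elim i)
    then have "a * inverse (real i) + d * (partial_sum i \<omega> / real i) =
        (a + d * partial_sum i \<omega>) / real i"
      and "inverse (real i) + d = (1 + real i * d) / real i"
      by (simp_all add: field_simps)
    then show ?case
      using elim by simp
  qed
  ultimately show "(\<lambda>i. (a + d * partial_sum i \<omega>) / (1 + real i * d)) \<longlonglongrightarrow> 0"
    by (simp add: Lim_transform_eventually)
qed

end

lemma gaussian_indep_centered_seq:
  fixes S :: "real^'n^'n" and X :: "nat \<Rightarrow> 'a \<Rightarrow> real^'n"
  assumes S: "spd S" and M: "prob_space M"
    and X: "\<And>l. distributed M lborel (X l) (\<lambda>x. ennreal (gauss_density S x))"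
    and ind: "prob_space.indep_vars M (\<lambda>_. borel) X UNIV"
  shows "indep_centered_seq M (\<lambda>l \<omega>. u \<bullet> X l \<omega>)
    (\<integral>x. gauss_density S x * (u \<bullet> x) ^ 2 \<partial>lborel) (\<integral>x. gauss_density S x * (u \<bullet> x) ^ 4 \<partial>lborel)"
proof -
  interpret prob_space M
    by (rule M)
  have nonneg: "\<And>x. x \<in> space lborel \<Longrightarrow> 0 \<le> gauss_density S x"
    using gauss_density_pos[OF S M X] less_imp_le by blast
  have moment: "expectation (\<lambda>\<omega>. (u \<bullet> X l \<omega>) ^ k) = (\<integral>x. gauss_density S x * (u \<bullet> x) ^ k \<partial>lborel)"
    for l k
    by (rule distributed_integral[OF X _ nonneg, symmetric]) simp
  show ?thesis
  proof unfold_locales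
    show "indep_vars (\<lambda>_. borel) (\<lambda>l \<omega>. u \<bullet> X l \<omega>) UNIV"
      using indep_vars_compose2[OF ind, of "\<lambda>_ x. u \<bullet> x" "\<lambda>_. borel"] by simp
    show "integrable M (\<lambda>\<omega>. (u \<bullet> X l \<omega>) ^ 4)" for l
      using distributed_integrable[OF X _ nonneg, of "\<lambda>x. (u \<bullet> x) ^ 4"]
        integrable_gauss_density_moment[OF S M X, of 4 u] by simp
    show "expectation (\<lambda>\<omega>. u \<bullet> X l \<omega>) = 0" for l
      using moment[of l 1] gauss_density_first_moment[OF S M X] by simp
  qed (simp_all add: moment)
qed

section \<open>Convergence of the projected iterates\<close>

lemma (in prob_space) tendsto_prob_norm_sum_ge:
  fixes f :: "nat \<Rightarrow> nat \<Rightarrow> 'a \<Rightarrow> real" and v :: "nat \<Rightarrow> 'b::real_normed_vector"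
  assumes "finite F"
    and meas: "\<And>k i. k \<in> F \<Longrightarrow> f k i \<in> borel_measurable M"
    and lim: "\<And>k c. k \<in> F \<Longrightarrow> 0 < c \<Longrightarrow>
      (\<lambda>i. prob {\<omega> \<in> space M. c / real i powr p \<le> \<bar>f k i \<omega>\<bar>}) \<longlonglongrightarrow> 0"
    and "0 < e"
  shows "(\<lambda>i. prob {\<omega> \<in> space M. e / real i powr p \<le> norm (\<Sum>k\<in>F. f k i \<omega> *\<^sub>R v k)}) \<longlonglongrightarrow> 0"
proof -
  define R where "R = 1 + (\<Sum>k\<in>F. norm (v k))"
  have "1 \<le> R"
    by (simp add: R_def sum_nonneg)
  define B where "B k i = {\<omega> \<in> space M. e / R / real i powr p \<le> \<bar>f k i \<omega>\<bar>}" for k i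
  have B_sets: "B k i \<in> sets M" if "k \<in> F" for k i
    using meas[OF that] unfolding B_def by measurable
  have bound: "prob {\<omega> \<in> space M. e / real i powr p \<le> norm (\<Sum>k\<in>F. f k i \<omega> *\<^sub>R v k)} \<le>
      (\<Sum>k\<in>F. prob (B k i))" if "1 \<le> i" for i
  proof -
    have "{\<omega> \<in> space M. e / real i powr p \<le> norm (\<Sum>k\<in>F. f k i \<omega> *\<^sub>R v k)} \<subseteq> (\<Union>k\<in>F. B k i)"
    proof (rule subsetI, rule ccontr)
      fix \<omega> assume \<omega>: "\<omega> \<in> {\<omega> \<in> space M. e / real i powr p \<le> norm (\<Sum>k\<in>F. f k i \<omega> *\<^sub>R v k)}"
        and "\<omega> \<notin> (\<Union>k\<in>F. B k i)"
      then have small: "\<bar>f k i \<omega>\<bar> \<le> e / R / real i powr p" if "k \<in> F" for k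
        using that by (auto simp: B_def)
      have "norm (\<Sum>k\<in>F. f k i \<omega> *\<^sub>R v k) \<le> (\<Sum>k\<in>F. \<bar>f k i \<omega>\<bar> * norm (v k))"
        by (rule order_trans[OF norm_sum]) simp
      also have "\<dots> \<le> (\<Sum>k\<in>F. e / R / real i powr p * norm (v k))"
        using small by (intro sum_mono mult_right_mono) auto
      also have "\<dots> = e / R / real i powr p * (R - 1)"
        by (simp add: R_def sum_distrib_left)
      also have "\<dots> < e / real i powr p"
        using \<open>0 < e\<close> \<open>1 \<le> R\<close> that by (simp add: field_simps)
      finally show False
        using \<omega> by simp
    qed
    then have "prob {\<omega> \<in> space M. e / real i powr p \<le> norm (\<Sum>k\<in>F. f k i \<omega> *\<^sub>R v k)} \<le>
        prob (\<Union>k\<in>F. B k i)"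
      using B_sets \<open>finite F\<close> by (intro finite_measure_mono) auto
    also have "\<dots> \<le> (\<Sum>k\<in>F. prob (B k i))"
      using B_sets by (intro measure_UNION_le \<open>finite F\<close>) auto
    finally show ?thesis .
  qed
  have "(\<lambda>i. \<Sum>k\<in>F. prob (B k i)) \<longlonglongrightarrow> 0"
    unfolding B_def using \<open>0 < e\<close> \<open>1 \<le> R\<close> by (intro tendsto_null_sum lim) auto
  then show ?thesis
  proof (rule tendsto_sandwich[OF _ _ tendsto_const, rotated 2])
    show "eventually (\<lambda>i. prob {\<omega> \<in> space M. e / real i powr p \<le> norm (\<Sum>k\<in>F. f k i \<omega> *\<^sub>R v k)} \<le>
        (\<Sum>k\<in>F. prob (B k i))) sequentially"
      using eventually_ge_at_top[of 1] by eventually_elim (rule bound)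
  qed simp
qed

lemma sum_outer_apply:
  "(S ** (\<Sum>k\<in>F. outer (w k) (w k))) *v x = (\<Sum>k\<in>F. (w k \<bullet> x) *\<^sub>R (S *v w k))"
  by (induction F rule: infinite_finite_induct)
    (simp_all add: matrix_vector_mult_add_rdistrib matrix_add_ldistrib outer_mult_vec
      matrix_vector_mul_assoc[symmetric] matrix_vector_mult_scaleR)

lemma (in simultaneous_eigenbasis) projection_tendsto_0:
  fixes M :: "'a measure" and e x :: "nat \<Rightarrow> 'a \<Rightarrow> real^'n" and x0 :: "real^'n"
  assumes M: "prob_space M"
    and gauss: "\<And>l. distributed M lborel (e l) (\<lambda>v. ennreal (gauss_density S v))"
    and indep: "prob_space.indep_vars M (\<lambda>_. borel) e UNIV"
    and init: "\<And>\<omega>. x 0 \<omega> = x0"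
    and rec: "\<And>i \<omega>. x (Suc i) \<omega> = Mt H S G i *v x i \<omega> + (mat 1 - Mt H S G i) *v e i \<omega>"
    and R: "finite R" "R \<subseteq> K" and pos: "\<And>k. k \<in> R \<Longrightarrow> 0 < eigval 0 k"
  shows "0 < p \<Longrightarrow> p < 1 / 2 \<Longrightarrow> 0 < c \<Longrightarrow> (\<lambda>i. measure M {\<omega> \<in> space M.
      c / real i powr p \<le> norm ((S ** (\<Sum>k\<in>R. outer (w k) (w k))) *v x i \<omega>)}) \<longlonglongrightarrow> 0"
    and "AE \<omega> in M. (\<lambda>i. (S ** (\<Sum>k\<in>R. outer (w k) (w k))) *v x i \<omega>) \<longlonglongrightarrow> 0"
proof -
  interpret prob_space M
    by (rule M)
  have seq: "indep_centered_seq M (\<lambda>l \<omega>. w k \<bullet> e l \<omega>)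
      (\<integral>v. gauss_density S v * (w k \<bullet> v) ^ 2 \<partial>lborel)
      (\<integral>v. gauss_density S v * (w k \<bullet> v) ^ 4 \<partial>lborel)"
    for k
    using spd M gauss indep by (rule gaussian_indep_centered_seq)
  have coeff: "w k \<bullet> x i \<omega> =
      (w k \<bullet> x0 + eigval 0 k * (\<Sum>l<i. w k \<bullet> e l \<omega>)) / (1 + real i * eigval 0 k)"
    if "k \<in> R" for k i \<omega>
    using coeff_recursion[of "\<lambda>i. x i \<omega>" "\<lambda>l. e l \<omega>", OF rec] that R pos by (auto simp: init)
  show "(\<lambda>i. measure M {\<omega> \<in> space M.
      c / real i powr p \<le> norm ((S ** (\<Sum>k\<in>R. outer (w k) (w k))) *v x i \<omega>)}) \<longlonglongrightarrow> 0"
    if "0 < p" "p < 1 / 2" "0 < c"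
    unfolding sum_outer_apply using that R
    by (simp add: coeff, intro tendsto_prob_norm_sum_ge
        indep_centered_seq.prob_coeff_ge_tendsto_0[OF seq] indep_centered_seq.measurable_Z[OF seq]
        borel_measurable_divide borel_measurable_add borel_measurable_sum borel_measurable_times pos)
      auto
  have "AE \<omega> in M. (\<lambda>i. w k \<bullet> x i \<omega>) \<longlonglongrightarrow> 0" if "k \<in> R" for k
    unfolding coeff[OF that] by (rule indep_centered_seq.AE_coeff_tendsto_0[OF seq pos[OF that]])
  then have "AE \<omega> in M. \<forall>k\<in>R. (\<lambda>i. w k \<bullet> x i \<omega>) \<longlonglongrightarrow> 0"
    using R by (intro AE_finite_allI) auto
  then show "AE \<omega> in M. (\<lambda>i. (S ** (\<Sum>k\<in>R. outer (w k) (w k))) *v x i \<omega>) \<longlonglongrightarrow> 0"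
    unfolding sum_outer_apply
    by eventually_elim
      (auto intro!: tendsto_null_sum bounded_bilinear.tendsto_left_zero[OF bounded_bilinear_scaleR])
qed

theorem propositionA2:
  fixes H :: "real^'d^'n" and \<Sigma> :: "real^'n^'n" and y :: "real^'n"
    and J :: nat and v0 :: "nat \<Rightarrow> real^'d"
    and M :: "'a measure" and \<epsilon> :: "nat \<Rightarrow> nat \<Rightarrow> 'a \<Rightarrow> real^'n"
    and h r :: nat and w :: "nat \<Rightarrow> real^'n"
  assumes \<Sigma>_spd: "spd \<Sigma>"
    and J2: "J \<ge> 2"
    and h_def: "h = rank H"
    and M_prob: "prob_space M"
    and eps_gauss: "\<And>i j. j \<in> {1..J} \<Longrightarrow>
        distributed M lborel (\<epsilon> i j) (\<lambda>x. ennreal (gauss_density \<Sigma> x))"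
    and eps_indep: "prob_space.indep_vars M (\<lambda>_. borel) (\<lambda>(i, j). \<epsilon> i j) (UNIV \<times> {1..J})"
    and r_le_h: "r \<le> h"
    and w_orth: "\<And>k l. k \<in> {1..CARD('n)} \<Longrightarrow> l \<in> {1..CARD('n)} \<Longrightarrow>
        w k \<bullet> (\<Sigma> *v w l) = (if k = l then 1 else 0)"
    and w_basis: "span (w ` {1..CARD('n)}) = UNIV"
    and w_eig: "\<And>k i. k \<in> {1..CARD('n)} \<Longrightarrow>
        \<exists>\<delta>. Cseq H \<Sigma> (ens_cov J v0) i *v w k = \<delta> *\<^sub>R (\<Sigma> *v w k)"
    and w_pos: "\<And>k. k \<in> {1..r} \<Longrightarrow>
        w k \<in> range (\<lambda>x. (matrix_inv \<Sigma> ** H) *v x) \<and>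
        (\<exists>\<delta>>0. Cseq H \<Sigma> (ens_cov J v0) 0 *v w k = \<delta> *\<^sub>R (\<Sigma> *v w k))"
    and w_zero: "\<And>k. k \<in> {r<..h} \<Longrightarrow>
        w k \<in> range (\<lambda>x. (matrix_inv \<Sigma> ** H) *v x) \<and>
        Cseq H \<Sigma> (ens_cov J v0) 0 *v w k = 0"
    and w_ker: "\<And>k. k \<in> {h<..CARD('n)} \<Longrightarrow> transpose H *v w k = 0"
  shows "\<forall>j\<in>{1..J}.
     (\<forall>p \<epsilon>'. 0 < p \<and> p < 1/2 \<and> \<epsilon>' > 0 \<longrightarrow>
        (\<lambda>i. measure M {\<omega> \<in> space M.
            norm ((\<Sigma> ** (\<Sum>k=1..r. outer (w k) (w k))) *v theta H \<Sigma> y J v0 \<epsilon> i j \<omega>)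
              \<ge> \<epsilon>' / real i powr p}) \<longlonglongrightarrow> 0)
     \<and> (AE \<omega> in M. (\<lambda>i. (\<Sigma> ** (\<Sum>k=1..r. outer (w k) (w k))) *v theta H \<Sigma> y J v0 \<epsilon> i j \<omega>)
            \<longlonglongrightarrow> 0)"
proof -
  interpret simultaneous_eigenbasis H \<Sigma> "ens_cov J v0" w "{1..CARD('n)}"
    using \<Sigma>_spd ens_cov_psd w_orth w_basis w_eig by unfold_locales
  have r_range: "{1..r} \<subseteq> {1..CARD('n)}"
    using r_le_h h_def rank_bound[of H] by auto
  have eig_pos: "0 < eigval 0 k" if "k \<in> {1..r}" for k
    using w_pos[OF that] w_orth[of k k] r_range that by (auto simp: eigval_def)
  {
    fix j assume j: "j \<in> {1..J}"
    note projection_tendsto_0[of M "\<lambda>l. \<epsilon> l j" "\<lambda>i. theta H \<Sigma> y J v0 \<epsilon> i j",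
        OF M_prob eps_gauss[OF j] prob_space.indep_vars_column[OF M_prob eps_indep j]
        theta.simps finite_atLeastAtMost r_range eig_pos]
  }
  then show ?thesis
    by auto
qed

end
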